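(* Under the standing assumptions of the context, with $F(h):=\alpha Lh+\alpha_p\Delta_p(h)+\nabla\psi(h)$ and $p\ge2$, for all $h,h'\in\mathbb{R}^N$, \[ \langle h-h',F(h)-F(h')\rangle\ge\mu\|h-h'\|_2^2 . \]
   Context: $G$ is a connected undirected weighted graph on $N$ nodes with symmetric weights $W_{ij}\ge0$, $W_{ii}=0$; $L=D-W$ with $D=\mathrm{diag}(\sum_jW_{ij})$; for $p\ge2$, $(\Delta_p(h))_i=\sum_jW_{ij}|h_i-h_j|^{p-2}(h_i-h_j)$. Standing assumptions: $p\in[2,\infty)$; $\alpha>0$, $\alpha_p\ge0$; $\psi:\mathbb{R}^N\to\mathbb{R}$ is $C^1$ and $\mu$-strongly convex with $\mu>0$: $\langle\nabla\psi(x)-\nabla\psi(y),x-y\rangle\ge\mu\|x-y\|_2^2$. *)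

theory Defs
  imports "HOL-Analysis.Analysis"
begin

definition sym_weights :: "real^'n^'n \<Rightarrow> bool" where
  "sym_weights W \<longleftrightarrow> (\<forall>i j. W$i$j = W$j$i) \<and> (\<forall>i j. W$i$j \<ge> 0) \<and> (\<forall>i. W$i$i = 0)"

definition graph_connected :: "real^'n^'n \<Rightarrow> bool" where
  "graph_connected W \<longleftrightarrow> (\<forall>i j. (i, j) \<in> {(a, b). W$a$b > 0}\<^sup>*)"

definition degree_vec :: "real^'n^'n \<Rightarrow> real^'n" where
  "degree_vec W = (\<chi> i. \<Sum>j\<in>UNIV. W$i$j)"

definition laplacian :: "real^'n^'n \<Rightarrow> real^'n \<Rightarrow> real^'n" where
  "laplacian W h = (\<chi> i. (degree_vec W)$i * h$i - (\<Sum>j\<in>UNIV. W$i$j * h$j))"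

definition p_laplacian :: "real^'n^'n \<Rightarrow> real \<Rightarrow> real^'n \<Rightarrow> real^'n" where
  "p_laplacian W p h = (\<chi> i. \<Sum>j\<in>UNIV. W$i$j * \<bar>h$i - h$j\<bar> powr (p - 2) * (h$i - h$j))"

end

theory Submission
  imports Defs
begin

text \<open>Both Laplacians are graph \<open>\<phi>\<close>-Laplacians \<open>(\<Delta>\<^sub>\<phi> h)\<^sub>i = \<Sum>\<^sub>j W\<^sub>i\<^sub>j \<phi>(h\<^sub>i - h\<^sub>j)\<close>,
  with \<open>\<phi> t = t\<close> and \<open>\<phi> t = |t|\<^sup>p\<^sup>-\<^sup>2 t\<close> odd and nondecreasing. For symmetric nonnegative weights,
  summation by parts gives, with \<open>x = h - h'\<close>,
  \<open>2\<langle>x, \<Delta>\<^sub>\<phi> h - \<Delta>\<^sub>\<phi> h'\<rangle> = \<Sum>\<^sub>i\<^sub>j W\<^sub>i\<^sub>j (x\<^sub>i - x\<^sub>j)(\<phi>(h\<^sub>i - h\<^sub>j) - \<phi>(h'\<^sub>i - h'\<^sub>j)) \<ge> 0\<close>,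
  since \<open>x\<^sub>i - x\<^sub>j = (h\<^sub>i - h\<^sub>j) - (h'\<^sub>i - h'\<^sub>j)\<close>.\<close>

definition phi_laplacian :: "real^'n^'n \<Rightarrow> (real \<Rightarrow> real) \<Rightarrow> real^'n \<Rightarrow> real^'n" where
  "phi_laplacian W \<phi> h = (\<chi> i. \<Sum>j\<in>UNIV. W$i$j * \<phi> (h$i - h$j))"

lemma laplacian_eq_phi_laplacian: "laplacian W h = phi_laplacian W (\<lambda>t. t) h"
  unfolding laplacian_def degree_vec_def phi_laplacian_def
  by (simp add: sum_distrib_left sum_subtractf right_diff_distrib mult.commute)

lemma p_laplacian_eq_phi_laplacian:
  "p_laplacian W p h = phi_laplacian W (\<lambda>t. \<bar>t\<bar> powr (p - 2) * t) h"
  unfolding p_laplacian_def phi_laplacian_def by (simp add: mult.assoc)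

lemma mono_abs_powr_mult_self:
  fixes q :: real
  assumes "q \<ge> 0"
  shows "mono (\<lambda>t. \<bar>t\<bar> powr q * t)"
proof -
  have nonneg_case: "\<bar>y\<bar> powr q * y \<le> \<bar>x\<bar> powr q * x" if "0 \<le> y" "y \<le> x" for x y :: real
    using that assms by (intro mult_mono powr_mono2) auto
  show ?thesis
  proof (rule monoI)
    fix y x :: real
    assume "y \<le> x"
    consider "0 \<le> y" | "y < 0" "0 \<le> x" | "x < 0"
      by linarith
    then show "\<bar>y\<bar> powr q * y \<le> \<bar>x\<bar> powr q * x"
    proof cases
      case 1
      then show ?thesis using nonneg_case \<open>y \<le> x\<close> by blast
    next
      case 2
      have "\<bar>y\<bar> powr q * y \<le> 0" "0 \<le> \<bar>x\<bar> powr q * x"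
        using 2 by (simp_all add: mult_nonneg_nonpos)
      then show ?thesis by linarith
    next
      case 3
      have "\<bar>-x\<bar> powr q * (-x) \<le> \<bar>-y\<bar> powr q * (-y)"
        using 3 \<open>y \<le> x\<close> by (intro nonneg_case) simp_all
      then show ?thesis by simp
    qed
  qed
qed

lemma mono_imp_diff_mult_diff_nonneg:
  fixes \<phi> :: "real \<Rightarrow> real"
  assumes "mono \<phi>"
  shows "(a - b) * (\<phi> a - \<phi> b) \<ge> 0"
proof (cases "b \<le> a")
  case True
  then show ?thesis using monoD[OF assms True] by simp
next
  case False
  then show ?thesis using monoD[OF assms, of a b] by (simp add: mult_nonpos_nonpos)
qed

lemma sum_by_parts_antisym:
  fixes x :: "'a \<Rightarrow> real"
  assumes "finite I" and antisym: "\<And>i j. a j i = - a i j"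
  shows "2 * (\<Sum>i\<in>I. x i * (\<Sum>j\<in>I. a i j)) = (\<Sum>i\<in>I. \<Sum>j\<in>I. (x i - x j) * a i j)"
proof -
  have "(\<Sum>i\<in>I. \<Sum>j\<in>I. x j * a i j) = (\<Sum>i\<in>I. \<Sum>j\<in>I. x i * a j i)"
    by (rule sum.swap)
  also have "\<dots> = (\<Sum>i\<in>I. \<Sum>j\<in>I. - (x i * a i j))"
    by (intro sum.cong refl) (metis antisym mult_minus_right)
  also have "\<dots> = - (\<Sum>i\<in>I. x i * (\<Sum>j\<in>I. a i j))"
    by (simp add: sum_distrib_left sum_negf)
  moreover have "(\<Sum>i\<in>I. \<Sum>j\<in>I. (x i - x j) * a i j)
      = (\<Sum>i\<in>I. x i * (\<Sum>j\<in>I. a i j)) - (\<Sum>i\<in>I. \<Sum>j\<in>I. x j * a i j)"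
    by (simp add: left_diff_distrib sum_subtractf sum_distrib_left)
  ultimately show ?thesis by linarith
qed

lemma phi_laplacian_monotone:
  fixes W :: "real^'n^'n" and \<phi> :: "real \<Rightarrow> real" and h h' :: "real^'n"
  assumes sym: "\<And>i j. W$i$j = W$j$i" and nonneg: "\<And>i j. W$i$j \<ge> 0"
    and odd: "\<And>t. \<phi> (- t) = - \<phi> t" and "mono \<phi>"
  shows "(h - h') \<bullet> (phi_laplacian W \<phi> h - phi_laplacian W \<phi> h') \<ge> 0"
proof -
  define x where "x = h - h'"
  define a where "a i j = W$i$j * (\<phi> (h$i - h$j) - \<phi> (h'$i - h'$j))" for i j
  have antisym: "a j i = - a i j" for i j
    using odd[of "h$i - h$j"] odd[of "h'$i - h'$j"] sym[of i j] by (simp add: a_def algebra_simps)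
  have "(phi_laplacian W \<phi> h - phi_laplacian W \<phi> h')$i = (\<Sum>j\<in>UNIV. a i j)" for i
    by (simp add: phi_laplacian_def a_def sum_subtractf right_diff_distrib)
  then have "(h - h') \<bullet> (phi_laplacian W \<phi> h - phi_laplacian W \<phi> h')
      = (\<Sum>i\<in>UNIV. x$i * (\<Sum>j\<in>UNIV. a i j))"
    by (simp add: inner_vec_def x_def)
  then have "2 * ((h - h') \<bullet> (phi_laplacian W \<phi> h - phi_laplacian W \<phi> h'))
      = (\<Sum>i\<in>UNIV. \<Sum>j\<in>UNIV. (x$i - x$j) * a i j)"
    using sum_by_parts_antisym[where x = "\<lambda>i. x$i", OF finite antisym] by simp
  also have "\<dots> \<ge> 0"
  proof (intro sum_nonneg)
    fix i j
    have "x$i - x$j = (h$i - h$j) - (h'$i - h'$j)"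
      by (simp add: x_def)
    then show "(x$i - x$j) * a i j \<ge> 0"
      using mono_imp_diff_mult_diff_nonneg[OF \<open>mono \<phi>\<close>] nonneg[of i j]
      by (simp add: a_def mult.left_commute)
  qed
  finally show ?thesis by simp
qed

theorem mainTheorem12:
  fixes W :: "real^'n^'n" and p \<alpha> \<alpha>p \<mu> :: real
    and \<psi> :: "real^'n \<Rightarrow> real" and grad\<psi> :: "real^'n \<Rightarrow> real^'n"
    and h h' :: "real^'n"
  assumes "sym_weights W" and "graph_connected W"
    and "p \<ge> 2" and "\<alpha> > 0" and "\<alpha>p \<ge> 0"
    and "\<And>x. (\<psi> has_derivative (\<lambda>v. grad\<psi> x \<bullet> v)) (at x)"
    and "continuous_on UNIV grad\<psi>"
    and "\<mu> > 0"
    and "\<And>x y. (grad\<psi> x - grad\<psi> y) \<bullet> (x - y) \<ge> \<mu> * (norm (x - y))\<^sup>2"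
  shows "(h - h') \<bullet> ((\<alpha> *\<^sub>R laplacian W h + \<alpha>p *\<^sub>R p_laplacian W p h + grad\<psi> h)
                    - (\<alpha> *\<^sub>R laplacian W h' + \<alpha>p *\<^sub>R p_laplacian W p h' + grad\<psi> h'))
         \<ge> \<mu> * (norm (h - h'))\<^sup>2"
proof -
  have sym: "\<And>i j. W$i$j = W$j$i" and nonneg: "\<And>i j. W$i$j \<ge> 0"
    using assms(1) unfolding sym_weights_def by auto
  have "(h - h') \<bullet> (laplacian W h - laplacian W h') \<ge> 0"
    unfolding laplacian_eq_phi_laplacian
    by (rule phi_laplacian_monotone[OF sym nonneg]) (auto intro: monoI)
  moreover have "(h - h') \<bullet> (p_laplacian W p h - p_laplacian W p h') \<ge> 0"
    unfolding p_laplacian_eq_phi_laplacian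
    by (rule phi_laplacian_monotone[OF sym nonneg])
      (use assms(3) mono_abs_powr_mult_self[of "p - 2"] in auto)
  moreover have "(h - h') \<bullet> ((\<alpha> *\<^sub>R laplacian W h + \<alpha>p *\<^sub>R p_laplacian W p h + grad\<psi> h)
                    - (\<alpha> *\<^sub>R laplacian W h' + \<alpha>p *\<^sub>R p_laplacian W p h' + grad\<psi> h'))
     = \<alpha> * ((h - h') \<bullet> (laplacian W h - laplacian W h'))
       + \<alpha>p * ((h - h') \<bullet> (p_laplacian W p h - p_laplacian W p h'))
       + (grad\<psi> h - grad\<psi> h') \<bullet> (h - h')"
    by (simp add: inner_commute algebra_simps)
  ultimately show ?thesis
    using assms(4,5) assms(9)[of h h'] by (smt (verit) mult_nonneg_nonneg)
qed

end
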